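(* Let $f:\mathbb R^n\to\mathbb R$ be convex, differentiable and $L$-Lipschitz smooth, $g:\mathbb R^n\to\mathbb R\cup\{+\infty\}$ proper, closed and convex, $F=f+g$, and assume $F$ has a minimizer $\bar x$. Let $(B_k)_{k\ge0}\subseteq(0,\infty)$, $(\rho_k)_{k\ge0}\subseteq[0,\infty)$, $L_k=B_k+\rho_k$, and assume there are constants $L_{\max}\ge L_{\min}>0$ with $L_k\in[L_{\min},L_{\max}]$ for all $k$. Let $\alpha_0=1$ and, for $k\ge1$, let $\alpha_k\in(0,1]$ satisfy $1-\alpha_k=\frac{\alpha_k^2L_k}{\alpha_{k-1}^2L_{k-1}}$. Define $\beta_0=1$, $\beta_k=\prod_{i=1}^k\max\big(1-\alpha_i,\frac{\alpha_i^2L_i}{\alpha_{i-1}^2L_{i-1}}\big)$ for $k\ge1$, fix $\mathcal E_0>0$ and $p>1$, and let $\mathcal R_k(p)=\mathcal E_0\big(1+\sum_{l=1}^kl^{-p}\big)$. Given $x_{-1},x^\circ_{-1}\in\mathbb R^n$, let $(y_k,x_k,x^\circ_k)_{k\ge0}$ and $(\epsilon_k)_{k\ge0}$ satisfy for all $k\ge0$: $y_k=\alpha_kx^\circ_{k-1}+(1-\alpha_k)x_{k-1}$; $x_k\approx_{\epsilon_k}T_{L_k}(y_k)$; $D_f(x_k,y_k)\le\frac{B_k}2\|x_k-y_k\|^2$; $x^\circ_k=x_{k-1}+\alpha_k^{-1}(x_k-x_{k-1})$; where $\epsilon_0=\mathcal E_0$ and $\epsilon_k=\mathcal E_0\beta_kk^{-p}+\frac{\rho_k}2\|x_k-y_k\|^2$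 for $k\ge1$. Then for all $k\ge0$, $$F(x_k)-F(\bar x)+\frac{\alpha_k^2L_k}2\|\bar x-x^\circ_k\|^2\le\Big(1+\frac{k\sqrt{L_0}}{2\sqrt{L_{\max}}}\Big)^{-2}\Big(\frac{L_0}2\|\bar x-x^\circ_{-1}\|^2+\mathcal R_k(p)\Big).$$ In particular, since $\mathcal R_k(p)\le\mathcal E_0\big(1+\sum_{l\ge1}l^{-p}\big)<\infty$, $F(x_k)-F(\bar x)=\mathcal O(1/k^2)$.
   Context: $D_f(u,w)=f(u)-f(w)-\langle\nabla f(w),u-w\rangle$; $L$-Lipschitz smooth means $D_f(u,w)\le\frac L2\|u-w\|^2$ for all $u,w$. For proper $h$, $\epsilon\ge0$: $\partial_\epsilon h(\bar x)=\{v:\langle v,u-\bar x\rangle\le h(u)-h(\bar x)+\epsilon\ \forall u\}$ for $\bar x\in\operatorname{dom}h$, $\emptyset$ otherwise. $\tilde x\approx_\epsilon T_\rho(x)$ means $\mathbf 0\in\nabla f(x)-\rho(x-\tilde x)+\partial_\epsilon g(\tilde x)$. *)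

theory Defs
  imports "HOL-Analysis.Analysis" "HOL-Library.Extended_Real"
begin

definition bregman :: "('a::real_inner \<Rightarrow> real) \<Rightarrow> ('a \<Rightarrow> 'a) \<Rightarrow> 'a \<Rightarrow> 'a \<Rightarrow> real" where
  "bregman f grad u w = f u - f w - inner (grad w) (u - w)"

text \<open>L-Lipschitz smoothness in the Bregman form of the paper.\<close>
definition lipschitz_smooth :: "real \<Rightarrow> ('a::real_inner \<Rightarrow> real) \<Rightarrow> ('a \<Rightarrow> 'a) \<Rightarrow> bool" where
  "lipschitz_smooth L f grad \<longleftrightarrow> (\<forall>u w. bregman f grad u w \<le> L / 2 * (norm (u - w))\<^sup>2)"

definition proper_fun :: "('a \<Rightarrow> ereal) \<Rightarrow> bool" where
  "proper_fun h \<longleftrightarrow> (\<forall>x. h x \<noteq> -\<infinity>) \<and> (\<exists>x. h x \<noteq> \<infinity>)"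

definition epigraph_e :: "('a \<Rightarrow> ereal) \<Rightarrow> ('a \<times> real) set" where
  "epigraph_e h = {(x, r). h x \<le> ereal r}"

definition convex_fun_e :: "('a::real_vector \<Rightarrow> ereal) \<Rightarrow> bool" where
  "convex_fun_e h \<longleftrightarrow> convex (epigraph_e h)"

definition closed_fun_e :: "('a::topological_space \<Rightarrow> ereal) \<Rightarrow> bool" where
  "closed_fun_e h \<longleftrightarrow> closed (epigraph_e h)"

definition eps_subdiff :: "('a::real_inner \<Rightarrow> ereal) \<Rightarrow> real \<Rightarrow> 'a \<Rightarrow> 'a set" where
  "eps_subdiff h eps xb =
     (if h xb \<noteq> \<infinity> then
        {v. \<forall>u. ereal (inner v (u - xb)) \<le> h u - h xb + ereal eps}
      else {})"

text \<open>xt \<approx>_eps T_rho(x): 0 \<in> grad f(x) - rho (x - xt) + \<partial>_eps g(xt).\<close>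
definition inexact_prox :: "('a::real_inner \<Rightarrow> 'a) \<Rightarrow> ('a \<Rightarrow> ereal) \<Rightarrow> real \<Rightarrow> real \<Rightarrow> 'a \<Rightarrow> 'a \<Rightarrow> bool" where
  "inexact_prox grad g rho eps x xt \<longleftrightarrow>
     0 \<in> (\<lambda>v. grad x - rho *\<^sub>R (x - xt) + v) ` eps_subdiff g eps xt"

end

theory Submission
  imports Defs
begin

text \<open>
  For a point z in the domain of g consider \<Phi>_k = F(x_k) - F(z) + \<alpha>_k^2 L_k / 2 |z - xo_k|^2.
  Testing the \<epsilon>_k-subgradient inequality of the k-th inexact proximal step at
  u = (1 - \<alpha>_k) x_{k-1} + \<alpha>_k z and using convexity of f and g gives
  \<Phi>_k \<le> (1 - \<alpha>_k) \<Phi>_{k-1} + E0 \<beta>_k k^(-p); the part \<rho>_k/2 |x_k - y_k|^2 of \<epsilon>_k is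
  absorbed exactly by the surplus L_k - B_k of the step size over the descent constant.
  The recursion for \<alpha>_k makes both arguments of the maximum defining \<beta>_k equal, so
  \<beta>_k = \<Prod>(1 - \<alpha>_i) = \<alpha>_k^2 L_k / L_0 and the recursion unrolls to \<Phi>_k \<le> \<beta>_k (\<Phi>_{-1} + R_k(p)).
  Finally \<alpha>_k \<ge> c sqrt \<beta>_k with c = sqrt (L_0 / Lmax), so 1 / sqrt \<beta>_k grows by at least c/2
  per step, i.e. \<beta>_k \<le> (1 + k c / 2)^(-2).
\<close>

lemma convex_on_above_tangent:
  fixes f :: "'a::real_normed_vector \<Rightarrow> real"
  assumes convex: "convex_on UNIV f" and deriv: "(f has_derivative D) (at c)"
  shows "f c + D (x - c) \<le> f x"
proof -
  define \<phi> where "\<phi> t = f (c + t *\<^sub>R (x - c))" for t :: real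
  have "((\<lambda>t::real. c + t *\<^sub>R (x - c)) has_derivative (\<lambda>t. t *\<^sub>R (x - c))) (at 0)"
    by (auto intro!: derivative_eq_intros)
  from has_derivative_compose[OF this] deriv
  have "(\<phi> has_derivative (\<lambda>t. D (t *\<^sub>R (x - c)))) (at 0)"
    unfolding \<phi>_def by simp
  moreover have "(\<lambda>t. D (t *\<^sub>R (x - c))) = (*) (D (x - c))"
    using has_derivative_bounded_linear[OF deriv] by (auto simp: linear_simps)
  ultimately have "(\<phi> has_field_derivative D (x - c)) (at 0)"
    by (simp add: has_field_derivative_def)
  moreover have "convex_on UNIV \<phi>"
  proof (rule convex_onI)
    fix t u v :: real assume "0 < t" "t < 1"
    moreover have "c + ((1 - t) * u + t * v) *\<^sub>R (x - c)
        = (1 - t) *\<^sub>R (c + u *\<^sub>R (x - c)) + t *\<^sub>R (c + v *\<^sub>R (x - c))"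
      by (simp add: algebra_simps)
    ultimately show "\<phi> ((1 - t) *\<^sub>R u + t *\<^sub>R v) \<le> (1 - t) * \<phi> u + t * \<phi> v"
      unfolding \<phi>_def using convex_onD[OF convex, of t] by simp
  qed simp
  ultimately have "\<phi> 1 - \<phi> 0 \<ge> D (x - c) * (1 - 0)"
    by (intro convex_on_imp_above_tangent[where A = UNIV]) auto
  then show ?thesis unfolding \<phi>_def by simp
qed

lemma convex_fun_eD:
  assumes "convex_fun_e g" and "g a \<le> ereal ra" and "g b \<le> ereal rb" and "0 \<le> t" and "t \<le> 1"
  shows "g ((1 - t) *\<^sub>R a + t *\<^sub>R b) \<le> ereal ((1 - t) * ra + t * rb)"
proof -
  have "(a, ra) \<in> epigraph_e g" "(b, rb) \<in> epigraph_e g"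
    using assms(2,3) by (auto simp: epigraph_e_def)
  then have "(1 - t) *\<^sub>R (a, ra) + t *\<^sub>R (b, rb) \<in> epigraph_e g"
    using assms(1,4,5) unfolding convex_fun_e_def by (intro convexD) auto
  then show ?thesis by (simp add: epigraph_e_def)
qed

lemma inexact_prox_descent:
  fixes f :: "'a::real_inner \<Rightarrow> real"
  assumes f_convex: "convex_on UNIV f"
    and f_grad: "\<And>z. (f has_derivative (\<lambda>h. inner (grad z) h)) (at z)"
    and prox: "inexact_prox grad g L eps y x"
    and descent: "bregman f grad x y \<le> B / 2 * (norm (x - y))\<^sup>2"
    and L: "L = B + \<rho>" and eps: "eps \<le> e + \<rho> / 2 * (norm (x - y))\<^sup>2"
    and gu: "g u \<le> ereal gu" and gx: "g x = ereal gx"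
  shows "f x + gx \<le> f u + gu + L / 2 * ((norm (u - y))\<^sup>2 - (norm (u - x))\<^sup>2) + e"
proof -
  from prox obtain v where v: "v \<in> eps_subdiff g eps x" and v_eq: "v = L *\<^sub>R (y - x) - grad y"
    unfolding inexact_prox_def by (auto simp: algebra_simps eq_neg_iff_add_eq_0)
  have "ereal (inner v (u - x)) \<le> g u - g x + ereal eps"
    using v gx unfolding eps_subdiff_def by auto
  also have "\<dots> \<le> ereal gu - ereal gx + ereal eps"
    using gu gx by (intro add_right_mono ereal_minus_mono) auto
  finally have subgrad: "inner v (u - x) \<le> gu - gx + eps" by simp
  have upper: "f x \<le> f y + inner (grad y) (x - y) + B / 2 * (norm (x - y))\<^sup>2"
    using descent unfolding bregman_def by simp
  have lower: "f y + inner (grad y) (u - y) \<le> f u"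
    using convex_on_above_tangent[OF f_convex f_grad] by simp
  have "inner v (u - x) = L / 2 * (2 * inner (y - x) (u - x)) - inner (grad y) (u - x)"
    by (simp add: v_eq inner_diff_left)
  also have "2 * inner (y - x) (u - x) = (norm (u - x))\<^sup>2 + (norm (x - y))\<^sup>2 - (norm (u - y))\<^sup>2"
    by (simp add: power2_norm_eq_inner inner_diff_left inner_diff_right inner_commute)
  finally have "inner v (u - x)
      = L / 2 * (norm (u - x))\<^sup>2 + L / 2 * (norm (x - y))\<^sup>2 - L / 2 * (norm (u - y))\<^sup>2
        - inner (grad y) (u - x)"
    by (simp add: algebra_simps)
  moreover have "L / 2 * (norm (x - y))\<^sup>2 = B / 2 * (norm (x - y))\<^sup>2 + \<rho> / 2 * (norm (x - y))\<^sup>2"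
    using L by (simp add: algebra_simps)
  moreover have "inner (grad y) (u - y) = inner (grad y) (x - y) + inner (grad y) (u - x)"
    by (simp add: inner_diff_right)
  ultimately show ?thesis
    using subgrad upper lower eps unfolding right_diff_distrib by linarith
qed

lemma inexact_accelerated_prox_step:
  fixes f :: "'a::real_inner \<Rightarrow> real"
  assumes f_convex: "convex_on UNIV f"
    and f_grad: "\<And>z. (f has_derivative (\<lambda>h. inner (grad z) h)) (at z)"
    and g_convex: "convex_fun_e g"
    and \<alpha>: "0 < \<alpha>" "\<alpha> \<le> 1"
    and y: "y = \<alpha> *\<^sub>R xo' + (1 - \<alpha>) *\<^sub>R x'"
    and xo: "xo = x' + (1 / \<alpha>) *\<^sub>R (x - x')"
    and prox: "inexact_prox grad g L eps y x"
    and descent: "bregman f grad x y \<le> B / 2 * (norm (x - y))\<^sup>2"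
    and L: "L = B + \<rho>" and eps: "eps \<le> e + \<rho> / 2 * (norm (x - y))\<^sup>2"
    and gz: "g z = ereal gz" and gx': "g x' = ereal gx'" and gx: "g x = ereal gx"
  shows "f x + gx - (f z + gz) + \<alpha>\<^sup>2 * L / 2 * (norm (z - xo))\<^sup>2
    \<le> (1 - \<alpha>) * (f x' + gx' - (f z + gz)) + \<alpha>\<^sup>2 * L / 2 * (norm (z - xo'))\<^sup>2 + e"
proof -
  \<comment> \<open>The momentum updates make u - y and u - x equal to \<alpha>(z - xo') and \<alpha>(z - xo).\<close>
  define u where "u = (1 - \<alpha>) *\<^sub>R x' + \<alpha> *\<^sub>R z"
  have gu: "g u \<le> ereal ((1 - \<alpha>) * gx' + \<alpha> * gz)"
    unfolding u_def using \<alpha> gz gx' by (intro convex_fun_eD[OF g_convex]) auto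
  have fu: "f u \<le> (1 - \<alpha>) * f x' + \<alpha> * f z"
    unfolding u_def using \<alpha> by (intro convex_onD[OF f_convex]) auto
  have "u - y = \<alpha> *\<^sub>R (z - xo')"
    unfolding u_def y by (simp add: algebra_simps)
  then have uy: "(norm (u - y))\<^sup>2 = \<alpha>\<^sup>2 * (norm (z - xo'))\<^sup>2"
    using \<alpha> by (simp add: power_mult_distrib)
  have "u - x = \<alpha> *\<^sub>R (z - xo)"
    unfolding u_def xo using \<alpha> by (simp add: algebra_simps)
  then have ux: "(norm (u - x))\<^sup>2 = \<alpha>\<^sup>2 * (norm (z - xo))\<^sup>2"
    using \<alpha> by (simp add: power_mult_distrib)
  have "f x + gx \<le> f u + ((1 - \<alpha>) * gx' + \<alpha> * gz) + L / 2 * ((norm (u - y))\<^sup>2 - (norm (u - x))\<^sup>2) + e"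
    by (rule inexact_prox_descent[OF f_convex f_grad prox descent L eps gu gx])
  with fu show ?thesis
    unfolding uy ux by (simp add: algebra_simps)
qed

lemma prod_accelerated_weights:
  fixes \<alpha> L :: "nat \<Rightarrow> real"
  assumes "\<alpha> 0 = 1" and "\<And>k. \<alpha> k \<noteq> 0" and "\<And>k. L k \<noteq> 0"
    and rec: "\<And>k. k \<ge> 1 \<Longrightarrow> 1 - \<alpha> k = (\<alpha> k)\<^sup>2 * L k / ((\<alpha> (k - 1))\<^sup>2 * L (k - 1))"
  shows "(\<Prod>i = 1..k. max (1 - \<alpha> i) ((\<alpha> i)\<^sup>2 * L i / ((\<alpha> (i - 1))\<^sup>2 * L (i - 1))))
    = (\<alpha> k)\<^sup>2 * L k / L 0"
proof (induction k)
  case 0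
  then show ?case using assms(1,3) by simp
next
  case (Suc k)
  have "max (1 - \<alpha> (Suc k)) ((\<alpha> (Suc k))\<^sup>2 * L (Suc k) / ((\<alpha> k)\<^sup>2 * L k))
      = (\<alpha> (Suc k))\<^sup>2 * L (Suc k) / ((\<alpha> k)\<^sup>2 * L k)"
    using rec[of "Suc k"] by simp
  then have "(\<Prod>i = 1..Suc k. max (1 - \<alpha> i) ((\<alpha> i)\<^sup>2 * L i / ((\<alpha> (i - 1))\<^sup>2 * L (i - 1))))
      = (\<alpha> k)\<^sup>2 * L k / L 0 * ((\<alpha> (Suc k))\<^sup>2 * L (Suc k) / ((\<alpha> k)\<^sup>2 * L k))"
    using Suc.IH by simp
  also have "\<dots> = (\<alpha> (Suc k))\<^sup>2 * L (Suc k) / L 0"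
    using assms(2,3)[of k] by simp
  finally show ?case .
qed

lemma recursive_inequality_unroll:
  fixes \<Phi> b q e :: "nat \<Rightarrow> real"
  assumes "\<Phi> 0 \<le> b 0 * E"
    and "\<And>k. b (Suc k) = b k * q (Suc k)" and "\<And>k. 0 \<le> q (Suc k)"
    and "\<And>k. \<Phi> (Suc k) \<le> q (Suc k) * \<Phi> k + b (Suc k) * e (Suc k)"
  shows "\<Phi> k \<le> b k * (E + (\<Sum>l = 1..k. e l))"
proof (induction k)
  case 0
  then show ?case using assms(1) by simp
next
  case (Suc k)
  have "\<Phi> (Suc k) \<le> q (Suc k) * (b k * (E + (\<Sum>l = 1..k. e l))) + b (Suc k) * e (Suc k)"
    using assms(4)[of k] mult_left_mono[OF Suc.IH assms(3)[of k]] by linarith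
  also have "\<dots> = b (Suc k) * (E + (\<Sum>l = 1..Suc k. e l))"
    using assms(2)[of k] by (simp add: algebra_simps)
  finally show ?case .
qed

lemma accelerated_weights_decay:
  fixes b a :: "nat \<Rightarrow> real"
  assumes "b 0 = 1" and b_pos: "\<And>k. b k > 0" and "c \<ge> 0"
    and b_Suc: "\<And>k. b (Suc k) = b k * (1 - a (Suc k))"
    and a_ge: "\<And>k. c * sqrt (b (Suc k)) \<le> a (Suc k)"
  shows "b k \<le> 1 / (1 + real k * c / 2)\<^sup>2"
proof -
  have "1 + real k * c / 2 \<le> 1 / sqrt (b k)"
  proof (induction k)
    case 0
    then show ?case using assms(1) by simp
  next
    case (Suc k)
    define s t where "s = sqrt (b (Suc k))" and "t = sqrt (b k)"
    have "s > 0" "t > 0" using b_pos by (auto simp: s_def t_def)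
    have "(t - s) * (t + s) = t\<^sup>2 * a (Suc k)"
      using b_Suc[of k] b_pos[of k] b_pos[of "Suc k"] by (simp add: s_def t_def algebra_simps)
    also have "\<dots> \<ge> t\<^sup>2 * (c * s)"
      using a_ge[of k] unfolding s_def by (intro mult_left_mono) auto
    finally have diff: "(t - s) * (t + s) \<ge> t\<^sup>2 * (c * s)" .
    have "0 \<le> a (Suc k)"
      using a_ge[of k] \<open>c \<ge> 0\<close> b_pos[of "Suc k"]
      by (meson order_trans mult_nonneg_nonneg real_sqrt_ge_zero less_imp_le)
    then have "s \<le> t"
      using b_Suc[of k] b_pos[of k] unfolding s_def t_def by (simp add: mult_left_le)
    then have "(t - s) * (t + s) \<le> (t - s) * (2 * t)"
      by (intro mult_left_mono) auto
    with diff have "t * (t * s * c) \<le> t * (2 * (t - s))"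
      by (simp add: power2_eq_square algebra_simps)
    then have "t * s * c \<le> 2 * (t - s)"
      using \<open>t > 0\<close> by (rule mult_left_le_imp_le)
    then have "c / 2 \<le> 1 / s - 1 / t"
      using \<open>s > 0\<close> \<open>t > 0\<close> by (simp add: field_simps)
    with Suc.IH show ?case
      unfolding s_def t_def by (simp add: field_simps)
  qed
  moreover have "0 < 1 + real k * c / 2"
    using \<open>c \<ge> 0\<close> by (simp add: add_pos_nonneg)
  ultimately have "sqrt (b k) \<le> 1 / (1 + real k * c / 2)"
    using b_pos[of k] by (simp add: field_simps)
  then have "(sqrt (b k))\<^sup>2 \<le> (1 / (1 + real k * c / 2))\<^sup>2"
    using b_pos[of k] by (intro power_mono) auto
  then show ?thesis
    using b_pos[of k] by (simp add: power_divide)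
qed

lemma inverse_square_rate:
  fixes \<phi> N :: "nat \<Rightarrow> real"
  assumes "c > 0" and "\<And>k. \<phi> k \<le> N k / (1 + real k * c)\<^sup>2" and "\<And>k. N k \<le> M"
  shows "\<exists>C. \<forall>k \<ge> 1. \<phi> k \<le> C / (real k)\<^sup>2"
proof (intro exI allI impI)
  fix k :: nat assume "k \<ge> 1"
  define r where "r = real k * c"
  have "r > 0"
    using \<open>k \<ge> 1\<close> \<open>c > 0\<close> by (simp add: r_def)
  then have "max 0 M / (1 + r)\<^sup>2 \<le> max 0 M / r\<^sup>2"
    by (intro divide_left_mono power_mono mult_pos_pos) auto
  moreover have "N k / (1 + r)\<^sup>2 \<le> max 0 M / (1 + r)\<^sup>2"
    using assms(3)[of k] by (intro divide_right_mono) auto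
  ultimately show "\<phi> k \<le> max 0 M / c\<^sup>2 / (real k)\<^sup>2"
    using assms(2)[of k] by (simp add: r_def power_mult_distrib mult.commute)
qed

locale inexact_accelerated_prox_grad =
  fixes f :: "'a::real_inner \<Rightarrow> real" and grad :: "'a \<Rightarrow> 'a" and g :: "'a \<Rightarrow> ereal"
    and B \<rho> Lk \<alpha> \<beta> \<epsilon> :: "nat \<Rightarrow> real" and E0 p :: real
    and xm1 xom1 :: 'a and y x xo :: "nat \<Rightarrow> 'a"
  assumes f_convex: "convex_on UNIV f"
    and f_grad: "\<And>z. (f has_derivative (\<lambda>h. inner (grad z) h)) (at z)"
    and g_proper: "proper_fun g" and g_convex: "convex_fun_e g"
    and Lk_def: "\<And>k. Lk k = B k + \<rho> k" and Lk_pos: "\<And>k. Lk k > 0"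
    and rho_nonneg: "\<And>k. \<rho> k \<ge> 0"
    and alpha0: "\<alpha> 0 = 1"
    and alpha_range: "\<And>k. k \<ge> 1 \<Longrightarrow> 0 < \<alpha> k \<and> \<alpha> k \<le> 1"
    and alpha_rec: "\<And>k. k \<ge> 1 \<Longrightarrow>
          1 - \<alpha> k = (\<alpha> k)\<^sup>2 * Lk k / ((\<alpha> (k - 1))\<^sup>2 * Lk (k - 1))"
    and beta0: "\<beta> 0 = 1"
    and beta_def: "\<And>k. k \<ge> 1 \<Longrightarrow>
          \<beta> k = (\<Prod>i = 1..k. max (1 - \<alpha> i) ((\<alpha> i)\<^sup>2 * Lk i / ((\<alpha> (i - 1))\<^sup>2 * Lk (i - 1))))"
    and y0: "y 0 = \<alpha> 0 *\<^sub>R xom1 + (1 - \<alpha> 0) *\<^sub>R xm1"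
    and yk: "\<And>k. k \<ge> 1 \<Longrightarrow> y k = \<alpha> k *\<^sub>R xo (k - 1) + (1 - \<alpha> k) *\<^sub>R x (k - 1)"
    and prox: "\<And>k. inexact_prox grad g (Lk k) (\<epsilon> k) (y k) (x k)"
    and descent: "\<And>k. bregman f grad (x k) (y k) \<le> B k / 2 * (norm (x k - y k))\<^sup>2"
    and xo0: "xo 0 = xm1 + (1 / \<alpha> 0) *\<^sub>R (x 0 - xm1)"
    and xok: "\<And>k. k \<ge> 1 \<Longrightarrow> xo k = x (k - 1) + (1 / \<alpha> k) *\<^sub>R (x k - x (k - 1))"
    and eps0: "\<epsilon> 0 = E0"
    and epsk: "\<And>k. k \<ge> 1 \<Longrightarrow>
          \<epsilon> k = E0 * \<beta> k * real k powr (- p) + \<rho> k / 2 * (norm (x k - y k))\<^sup>2"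
begin

text \<open>xm1 and xom1 are the initial points x_{-1} and xo_{-1}. The real-valued objective is
  only meaningful on the domain of g, since real_of_ereal maps \<infinity> to 0.\<close>

definition objective :: "'a \<Rightarrow> real" where
  "objective z = f z + real_of_ereal (g z)"

definition lyapunov :: "'a \<Rightarrow> nat \<Rightarrow> real" where
  "lyapunov z k = objective (x k) - objective z + (\<alpha> k)\<^sup>2 * Lk k / 2 * (norm (z - xo k))\<^sup>2"

lemma alpha_pos: "0 < \<alpha> k" and alpha_le_1: "\<alpha> k \<le> 1"
  using alpha0 alpha_range[of k] by (cases "k = 0"; simp)+

lemma g_eq_ereal: "g z \<noteq> \<infinity> \<Longrightarrow> g z = ereal (real_of_ereal (g z))"
  using g_proper unfolding proper_fun_def by (cases "g z") auto

lemma g_x_finite: "g (x k) \<noteq> \<infinity>"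
  using prox[of k] unfolding inexact_prox_def eps_subdiff_def by (auto split: if_splits)

lemma beta_eq: "\<beta> k = (\<alpha> k)\<^sup>2 * Lk k / Lk 0"
proof (cases "k = 0")
  case True
  then show ?thesis using alpha0 beta0 Lk_pos[of 0] by simp
next
  case False
  then show ?thesis
    using beta_def prod_accelerated_weights[OF alpha0 _ _ alpha_rec] alpha_pos Lk_pos
    by (simp add: less_imp_neq[symmetric])
qed

lemma alpha_rec_Suc: "(\<alpha> (Suc k))\<^sup>2 * Lk (Suc k) = (1 - \<alpha> (Suc k)) * ((\<alpha> k)\<^sup>2 * Lk k)"
proof -
  have "(\<alpha> k)\<^sup>2 * Lk k \<noteq> 0"
    using alpha_pos[of k] Lk_pos[of k] by simp
  then show ?thesis
    using alpha_rec[of "Suc k"] by (simp add: eq_divide_eq)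
qed

lemma beta_Suc: "\<beta> (Suc k) = \<beta> k * (1 - \<alpha> (Suc k))"
  unfolding beta_eq alpha_rec_Suc by simp

lemma beta_pos: "\<beta> k > 0"
  unfolding beta_eq using alpha_pos[of k] Lk_pos by simp

lemma lyapunov_0:
  assumes "g z \<noteq> \<infinity>"
  shows "lyapunov z 0 \<le> Lk 0 / 2 * (norm (z - xom1))\<^sup>2 + E0"
proof -
  have "y 0 = xom1" and "xo 0 = x 0"
    using y0 xo0 alpha0 by simp_all
  moreover have "objective (x 0) \<le> objective z
      + Lk 0 / 2 * ((norm (z - y 0))\<^sup>2 - (norm (z - x 0))\<^sup>2) + E0"
    unfolding objective_def
    by (rule inexact_prox_descent[OF f_convex f_grad prox descent Lk_def])
      (use eps0 rho_nonneg[of 0] g_eq_ereal[OF assms] g_eq_ereal[OF g_x_finite] in auto)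
  ultimately show ?thesis
    unfolding lyapunov_def using alpha0 by (simp add: algebra_simps)
qed

lemma lyapunov_Suc:
  assumes "g z \<noteq> \<infinity>"
  shows "lyapunov z (Suc k)
    \<le> (1 - \<alpha> (Suc k)) * lyapunov z k + \<beta> (Suc k) * (E0 * real (Suc k) powr (- p))"
proof -
  have "objective (x (Suc k)) - objective z
        + (\<alpha> (Suc k))\<^sup>2 * Lk (Suc k) / 2 * (norm (z - xo (Suc k)))\<^sup>2
      \<le> (1 - \<alpha> (Suc k)) * (objective (x k) - objective z)
        + (\<alpha> (Suc k))\<^sup>2 * Lk (Suc k) / 2 * (norm (z - xo k))\<^sup>2
        + E0 * \<beta> (Suc k) * real (Suc k) powr (- p)"
    unfolding objective_def
    by (rule inexact_accelerated_prox_step[OF f_convex f_grad g_convex alpha_pos alpha_le_1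
          _ _ prox descent Lk_def])
      (use yk[of "Suc k"] xok[of "Suc k"] epsk[of "Suc k"] g_eq_ereal[OF assms]
        g_eq_ereal[OF g_x_finite] in auto)
  then show ?thesis
    unfolding lyapunov_def alpha_rec_Suc by (simp add: algebra_simps)
qed

lemma lyapunov_le_beta:
  assumes "g z \<noteq> \<infinity>"
  shows "lyapunov z k
    \<le> \<beta> k * (Lk 0 / 2 * (norm (z - xom1))\<^sup>2 + E0 * (1 + (\<Sum>l = 1..k. real l powr (- p))))"
proof -
  have "lyapunov z k
      \<le> \<beta> k * ((Lk 0 / 2 * (norm (z - xom1))\<^sup>2 + E0) + (\<Sum>l = 1..k. E0 * real l powr (- p)))"
  proof (rule recursive_inequality_unroll[where q = "\<lambda>k. 1 - \<alpha> k"])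
    show "lyapunov z 0 \<le> \<beta> 0 * (Lk 0 / 2 * (norm (z - xom1))\<^sup>2 + E0)"
      using lyapunov_0[OF assms] beta0 by simp
  qed (use beta_Suc alpha_le_1 lyapunov_Suc[OF assms] in auto)
  then show ?thesis
    by (simp add: sum_distrib_left algebra_simps)
qed

lemma beta_le:
  assumes Lmax: "\<And>k. Lk k \<le> Lmax"
  shows "\<beta> k \<le> 1 / (1 + real k * sqrt (Lk 0) / (2 * sqrt Lmax))\<^sup>2"
proof -
  have "0 < Lmax"
    using Lk_pos[of 0] Lmax[of 0] by linarith
  define c where "c = sqrt (Lk 0 / Lmax)"
  have "0 \<le> c"
    unfolding c_def using \<open>0 < Lmax\<close> Lk_pos[of 0] by simp
  have alpha_ge: "c * sqrt (\<beta> k) \<le> \<alpha> k" for k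
  proof -
    have "c * sqrt (\<beta> k) = sqrt ((\<alpha> k)\<^sup>2 * (Lk k / Lmax))"
      unfolding c_def beta_eq using Lk_pos[of 0] by (simp add: real_sqrt_mult[symmetric])
    also have "\<dots> \<le> sqrt ((\<alpha> k)\<^sup>2)"
      using Lmax[of k] \<open>0 < Lmax\<close> Lk_pos[of k]
      by (intro real_sqrt_le_mono mult_left_le) auto
    finally show ?thesis
      using alpha_pos[of k] by simp
  qed
  have "\<beta> k \<le> 1 / (1 + real k * c / 2)\<^sup>2"
    by (rule accelerated_weights_decay[OF beta0 beta_pos \<open>0 \<le> c\<close> beta_Suc alpha_ge])
  then show ?thesis
    unfolding c_def by (simp add: real_sqrt_divide mult.commute)
qed

lemma lyapunov_rate:
  assumes "g z \<noteq> \<infinity>" and "E0 \<ge> 0" and "\<And>k. Lk k \<le> Lmax"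
  shows "lyapunov z k \<le> (Lk 0 / 2 * (norm (z - xom1))\<^sup>2 + E0 * (1 + (\<Sum>l = 1..k. real l powr (- p))))
    / (1 + real k * sqrt (Lk 0) / (2 * sqrt Lmax))\<^sup>2"
proof -
  let ?N = "Lk 0 / 2 * (norm (z - xom1))\<^sup>2 + E0 * (1 + (\<Sum>l = 1..k. real l powr (- p)))"
  have "0 \<le> ?N"
    using Lk_pos[of 0] \<open>E0 \<ge> 0\<close> by (intro add_nonneg_nonneg mult_nonneg_nonneg sum_nonneg) auto
  have "lyapunov z k \<le> \<beta> k * ?N"
    by (rule lyapunov_le_beta[OF assms(1)])
  also have "\<dots> \<le> 1 / (1 + real k * sqrt (Lk 0) / (2 * sqrt Lmax))\<^sup>2 * ?N"
    by (rule mult_right_mono[OF beta_le[OF assms(3)] \<open>0 \<le> ?N\<close>])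
  finally show ?thesis
    by simp
qed

lemma objective_le_lyapunov: "objective (x k) - objective z \<le> lyapunov z k"
  unfolding lyapunov_def using Lk_pos[of k] by simp

end

theorem theorem3p9:
  fixes f :: "'a::euclidean_space \<Rightarrow> real" and grad :: "'a \<Rightarrow> 'a" and L :: real
    and g :: "'a \<Rightarrow> ereal" and F :: "'a \<Rightarrow> ereal" and xbar :: 'a
    and B \<rho> Lk \<alpha> \<beta> \<epsilon> :: "nat \<Rightarrow> real" and Lmin Lmax E0 p :: real
    and xm1 xom1 :: 'a and y x xo :: "nat \<Rightarrow> 'a"
  assumes f_convex: "convex_on UNIV f"
    and f_grad: "\<And>z. (f has_derivative (\<lambda>h. inner (grad z) h)) (at z)"
    and f_smooth: "lipschitz_smooth L f grad"
    and g_proper: "proper_fun g" and g_closed: "closed_fun_e g" and g_convex: "convex_fun_e g"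
    and F_def: "\<And>z. F z = ereal (f z) + g z"
    and xbar_min: "\<And>z. F xbar \<le> F z"
    and B_pos: "\<And>k. B k > 0" and rho_nonneg: "\<And>k. \<rho> k \<ge> 0"
    and Lk_def: "\<And>k. Lk k = B k + \<rho> k"
    and Lmin_pos: "Lmin > 0" and Lmin_le_Lmax: "Lmin \<le> Lmax"
    and Lk_bounds: "\<And>k. Lmin \<le> Lk k \<and> Lk k \<le> Lmax"
    and alpha0: "\<alpha> 0 = 1"
    and alpha_range: "\<And>k. k \<ge> 1 \<Longrightarrow> 0 < \<alpha> k \<and> \<alpha> k \<le> 1"
    and alpha_rec: "\<And>k. k \<ge> 1 \<Longrightarrow>
          1 - \<alpha> k = (\<alpha> k)\<^sup>2 * Lk k / ((\<alpha> (k - 1))\<^sup>2 * Lk (k - 1))"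
    and beta0: "\<beta> 0 = 1"
    and beta_def: "\<And>k. k \<ge> 1 \<Longrightarrow>
          \<beta> k = (\<Prod>i = 1..k. max (1 - \<alpha> i) ((\<alpha> i)\<^sup>2 * Lk i / ((\<alpha> (i - 1))\<^sup>2 * Lk (i - 1))))"
    and E0_pos: "E0 > 0" and p_gt1: "p > 1"
    and y0: "y 0 = \<alpha> 0 *\<^sub>R xom1 + (1 - \<alpha> 0) *\<^sub>R xm1"
    and yk: "\<And>k. k \<ge> 1 \<Longrightarrow> y k = \<alpha> k *\<^sub>R xo (k - 1) + (1 - \<alpha> k) *\<^sub>R x (k - 1)"
    and prox: "\<And>k. inexact_prox grad g (Lk k) (\<epsilon> k) (y k) (x k)"
    and descent: "\<And>k. bregman f grad (x k) (y k) \<le> B k / 2 * (norm (x k - y k))\<^sup>2"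
    and xo0: "xo 0 = xm1 + (1 / \<alpha> 0) *\<^sub>R (x 0 - xm1)"
    and xok: "\<And>k. k \<ge> 1 \<Longrightarrow> xo k = x (k - 1) + (1 / \<alpha> k) *\<^sub>R (x k - x (k - 1))"
    and eps0: "\<epsilon> 0 = E0"
    and epsk: "\<And>k. k \<ge> 1 \<Longrightarrow>
          \<epsilon> k = E0 * \<beta> k * real k powr (- p) + \<rho> k / 2 * (norm (x k - y k))\<^sup>2"
  shows "(\<forall>k. F (x k) - F xbar + ereal ((\<alpha> k)\<^sup>2 * Lk k / 2 * (norm (xbar - xo k))\<^sup>2)
            \<le> ereal ((Lk 0 / 2 * (norm (xbar - xom1))\<^sup>2
                       + E0 * (1 + (\<Sum>l = 1..k. real l powr (- p))))
                     / (1 + real k * sqrt (Lk 0) / (2 * sqrt Lmax))\<^sup>2))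
         \<and> (\<exists>C. \<forall>k\<ge>1. F (x k) - F xbar \<le> ereal (C / (real k)\<^sup>2))"
proof -
  have "Lk k > 0" and Lmax: "Lk k \<le> Lmax" for k
    using Lk_bounds[of k] Lmin_pos by auto
  interpret inexact_accelerated_prox_grad f grad g B \<rho> Lk \<alpha> \<beta> \<epsilon> E0 p xm1 xom1 y x xo
    by unfold_locales (fact f_convex f_grad g_proper g_convex Lk_def \<open>\<And>k. Lk k > 0\<close> rho_nonneg
        alpha0 alpha_range alpha_rec beta0 beta_def y0 yk prox descent xo0 xok eps0 epsk)+
  have F_eq: "F z = ereal (objective z)" if "g z \<noteq> \<infinity>" for z
    using g_eq_ereal[OF that] by (metis F_def objective_def plus_ereal.simps(1))
  have "g xbar \<noteq> \<infinity>"
    using xbar_min[of "x 0"] F_eq[OF g_x_finite] by (auto simp: F_def)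
  note rate = lyapunov_rate[OF \<open>g xbar \<noteq> \<infinity>\<close> less_imp_le[OF E0_pos] Lmax]
  define N where "N k = Lk 0 / 2 * (norm (xbar - xom1))\<^sup>2 + E0 * (1 + (\<Sum>l = 1..k. real l powr (- p)))" for k
  have "summable (\<lambda>l. real l powr (- p))"
    using summable_real_powr_iff[of "- p"] p_gt1 by simp
  then have "N k \<le> Lk 0 / 2 * (norm (xbar - xom1))\<^sup>2 + E0 * (1 + (\<Sum>l. real l powr (- p)))" for k
    unfolding N_def using E0_pos by (simp add: sum_le_suminf)
  moreover have "objective (x k) - objective xbar \<le> N k / (1 + real k * (sqrt (Lk 0) / (2 * sqrt Lmax)))\<^sup>2" for k
    using order_trans[OF objective_le_lyapunov rate] by (simp add: N_def)
  moreover have "sqrt (Lk 0) / (2 * sqrt Lmax) > 0"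
    using Lk_pos[of 0] Lmax[of 0] by simp
  ultimately have "\<exists>C. \<forall>k\<ge>1. objective (x k) - objective xbar \<le> C / (real k)\<^sup>2"
    by (intro inverse_square_rate)
  then show ?thesis
    using rate F_eq[OF g_x_finite] F_eq[OF \<open>g xbar \<noteq> \<infinity>\<close>] by (simp add: lyapunov_def)
qed

end
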